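(* Consider $S=\mathbb{Z}_+$ with convolution $*$ defined on point masses by $\delta_m*\delta_n=\delta_{\max\{m,n\}}$ if $m\ne n$ or $m=n=0$, and $\delta_n*\delta_n=q_n$ for $n\ge1$, where each $q_n=\sum_{j\in Q_n}q_n(j)\delta_j$ is a probability measure with finite support $Q_n\ni 0$ and $q_n(j)>0$ for $j\in Q_n$. Assume: for $n\ge1$, $\mathcal{L}_n\subset Q_n\subset\mathcal{L}_n\cup\{n\}$ where $\mathcal{L}_n=\{k:k<n\}$; and for $0<m<n$, $q_n(0)=q_n(m)q_m(0)$ and $q_n(0)\bigl(1+\sum_{0<k<n}1/q_k(0)\bigr)\le1$. Let $\lambda$ be the Haar measure of the hermitian discrete hypergroup $(S,* )$, and let $v_n=\lambda(n)$, $u_n=\lambda(n)-\lambda(\mathcal{L}_n)$. Then $\mathcal{X}_b(S)=\widehat{S}$, and $\widehat{S}$ with the topology of uniform convergence on compact subsets of $S$ is identified with the one-point compactification $\mathbb{Z}_+^*=\mathbb{Z}_+\cup\{\infty\}$ via $k\mapsto\chi_k$, where $\chi_\infty(n)=1$ for all $n\in\mathbb{Z}_+$ and, for $k\in\mathbb{Z}_+$, $\chi_k(n)=1$ if $n\le k$, $\chi_k(n)=\beta_k$ if $n=k+1$, and $\chi_k(n)=0$ if $n>k+1$, with $\beta_k=-\frac{\lambda(\mathcal{L}_{k+1})}{\lambda(k+1)}=-\frac{\sum_{j\in\mathcal{L}_{k+1}}v_j}{v_{k+1}}=\frac{u_{k+1}}{v_{k+1}}-1=(\delta_{k+1}*\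delta_{k+1})(k+1)-1=q_{k+1}(k+1)-1.$
   Context: $\mathbb{Z}_+=\{0,1,2,\dots\}$. Under the stated assumptions $(S,* )$ is a hermitian discrete hypergroup: $*$ is associative, $0$ is the identity, $*$ is commutative, and $0\in\operatorname{spt}(\delta_m*\delta_n)$ iff $m=n$. Its Haar measure $\lambda$ is given by $\lambda(0)=1$, $\lambda(n)=1/(\delta_n*\delta_n)(0)$ for $n\ge1$, $\lambda(A)=\sum_{j\in A}\lambda(j)$. For a complex function $\chi$ on $S$ write $\chi(m*n)=\int\chi\,d(\delta_m*\delta_n)$. $\mathcal{X}_b(S)$ is the set of nonzero bounded functions $\chi$ on $S$ with $\chi(m*n)=\chi(m)\chi(n)$ for all $m,n$ (characters); $\widehat{S}$ is the set of $\chi\in\mathcal{X}_b(S)$ with $\chi(m)=\overline{\chi(m)}$ for all $m$ (symmetric characters, the involution being the identity). *)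

theory Defs
  imports "HOL-Analysis.Analysis" "HOL-Library.Extended_Nat"
begin

text \<open>The hypergroup structure on the nonnegative integers (type nat) is determined by
  the family q, where q n j is the mass of the probability measure q_n at the point j.
  conv q m n j is the mass of the measure delta_m * delta_n at j.\<close>

definition conv :: "(nat \<Rightarrow> nat \<Rightarrow> real) \<Rightarrow> nat \<Rightarrow> nat \<Rightarrow> nat \<Rightarrow> real" where
  "conv q m n j =
     (if m \<noteq> n \<or> (m = 0 \<and> n = 0) then (if j = max m n then 1 else 0) else q n j)"

definition at_conv :: "(nat \<Rightarrow> nat \<Rightarrow> real) \<Rightarrow> (nat \<Rightarrow> complex) \<Rightarrow> nat \<Rightarrow> nat \<Rightarrow> complex" where
  "at_conv q c m n = (\<Sum>j\<in>{j. conv q m n j \<noteq> 0}. complex_of_real (conv q m n j) * c j)"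

definition haar :: "(nat \<Rightarrow> nat \<Rightarrow> real) \<Rightarrow> nat \<Rightarrow> real" where
  "haar q n = (if n = 0 then 1 else 1 / conv q n n 0)"

definition haar_set :: "(nat \<Rightarrow> nat \<Rightarrow> real) \<Rightarrow> nat set \<Rightarrow> real" where
  "haar_set q A = (\<Sum>j\<in>A. haar q j)"

definition Lset :: "nat \<Rightarrow> nat set" where
  "Lset n = {k. k < n}"

definition bchars :: "(nat \<Rightarrow> nat \<Rightarrow> real) \<Rightarrow> (nat \<Rightarrow> complex) set" where
  "bchars q = {c. c \<noteq> (\<lambda>_. 0) \<and> bounded (range c) \<and>
                    (\<forall>m n. at_conv q c m n = c m * c n)}"

text \<open>Symmetric characters (the dual S-hat); the involution on S is the identity.\<close>
definition sym_chars :: "(nat \<Rightarrow> nat \<Rightarrow> real) \<Rightarrow> (nat \<Rightarrow> complex) set" where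
  "sym_chars q = {c\<in>bchars q. \<forall>m. c m = cnj (c m)}"

definition ucc_topology :: "(nat \<Rightarrow> complex) topology" where
  "ucc_topology = topology (\<lambda>U. \<forall>f\<in>U. \<exists>K e. compact K \<and> e > 0 \<and>
        {g. \<forall>n\<in>K. norm (g n - f n) < e} \<subseteq> U)"

definition beta :: "(nat \<Rightarrow> nat \<Rightarrow> real) \<Rightarrow> nat \<Rightarrow> real" where
  "beta q k = - haar_set q (Lset (k+1)) / haar q (k+1)"

definition chi :: "(nat \<Rightarrow> nat \<Rightarrow> real) \<Rightarrow> enat \<Rightarrow> nat \<Rightarrow> complex" where
  "chi q k n = (case k of
       \<infinity> \<Rightarrow> 1
     | enat k \<Rightarrow> (if n \<le> k then 1 else if n = k + 1 then complex_of_real (beta q k) else 0))"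

end

theory Submission
  imports Defs
begin

text \<open>If c is a character then c(n) = c(m) c(n) for m < n, because delta_m * delta_n = delta_n.
  Hence a nonzero character equals 1 strictly below the last point N where it does not vanish
  (and equals 1 everywhere if there is no such point). Evaluating the character relation on
  delta_N * delta_N = q_N, the value x = c(N) solves x^2 = (1 - q_N(N)) + q_N(N) x, so x = 1 or
  x = q_N(N) - 1; and x = 1 is impossible, because the same relation at N + 1 would force
  c(N + 1) to be nonzero. Since q_n(j) = q_n(0) lambda(j) for j < n, the numbers q_N(N) - 1 are
  the numbers beta_{N-1}, and the characters are exactly the real functions chi_k. Finally chi is
  a continuous injection of the compact space Z_+^* into a Hausdorff space, hence a
  homeomorphism onto its image.\<close>

lemma istopology_ucc:
  "istopology (\<lambda>U :: (nat \<Rightarrow> complex) set. \<forall>f\<in>U. \<exists>K e. compact K \<and> e > 0 \<and>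
     {g. \<forall>n\<in>K. norm (g n - f n) < e} \<subseteq> U)"
  unfolding istopology_def
proof (intro conjI allI impI ballI)
  fix S T :: "(nat \<Rightarrow> complex) set" and f
  assume S: "\<forall>f\<in>S. \<exists>K e. compact K \<and> e > 0 \<and> {g. \<forall>n\<in>K. norm (g n - f n) < e} \<subseteq> S"
    and T: "\<forall>f\<in>T. \<exists>K e. compact K \<and> e > 0 \<and> {g. \<forall>n\<in>K. norm (g n - f n) < e} \<subseteq> T"
    and f: "f \<in> S \<inter> T"
  obtain K1 e1 where K1: "compact K1" "e1 > 0" "{g. \<forall>n\<in>K1. norm (g n - f n) < e1} \<subseteq> S"
    using S f by (meson IntD1)
  obtain K2 e2 where K2: "compact K2" "e2 > 0" "{g. \<forall>n\<in>K2. norm (g n - f n) < e2} \<subseteq> T"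
    using T f by (meson IntD2)
  have "{g. \<forall>n\<in>K1 \<union> K2. norm (g n - f n) < min e1 e2} \<subseteq> S \<inter> T"
    using K1(3) K2(3) by auto
  moreover have "compact (K1 \<union> K2)" "min e1 e2 > 0"
    using K1(1,2) K2(1,2) by (simp_all add: compact_Un)
  ultimately show "\<exists>K e. compact K \<and> e > 0 \<and> {g. \<forall>n\<in>K. norm (g n - f n) < e} \<subseteq> S \<inter> T"
    by meson
next
  fix \<K> :: "(nat \<Rightarrow> complex) set set" and f
  assume open_\<K>: "\<forall>U\<in>\<K>. \<forall>f\<in>U. \<exists>K e. compact K \<and> e > 0 \<and> {g. \<forall>n\<in>K. norm (g n - f n) < e} \<subseteq> U"
    and f: "f \<in> \<Union>\<K>"
  from f obtain U where "U \<in> \<K>" "f \<in> U"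
    by (rule UnionE)
  then obtain K e where "compact K" "e > 0" "{g. \<forall>n\<in>K. norm (g n - f n) < e} \<subseteq> U"
    using open_\<K> by meson
  moreover have "U \<subseteq> \<Union>\<K>"
    using \<open>U \<in> \<K>\<close> by blast
  ultimately show "\<exists>K e. compact K \<and> e > 0 \<and> {g. \<forall>n\<in>K. norm (g n - f n) < e} \<subseteq> \<Union>\<K>"
    by (meson subset_trans)
qed

lemma openin_ucc_topology:
  "openin ucc_topology U \<longleftrightarrow>
     (\<forall>f\<in>U. \<exists>K e. compact K \<and> e > 0 \<and> {g. \<forall>n\<in>K. norm (g n - f n) < e} \<subseteq> U)"
  unfolding ucc_topology_def topology_inverse'[OF istopology_ucc] ..

lemma topspace_ucc_topology: "topspace ucc_topology = UNIV"
proof -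
  have "openin ucc_topology UNIV"
    unfolding openin_ucc_topology by (intro ballI exI[of _ "{}"] exI[of _ "1::real"]) simp
  then show ?thesis
    using openin_subset[of ucc_topology UNIV] by auto
qed

lemma openin_ucc_topology_ball_at: "openin ucc_topology {g. dist (g n) a < r}"
  unfolding openin_ucc_topology
proof
  fix f assume f: "f \<in> {g. dist (g n) a < r}"
  have "{g. \<forall>m\<in>{n}. norm (g m - f m) < r - dist (f n) a} \<subseteq> {g. dist (g n) a < r}"
  proof
    fix g assume "g \<in> {g. \<forall>m\<in>{n}. norm (g m - f m) < r - dist (f n) a}"
    then have "dist (g n) (f n) < r - dist (f n) a"
      by (simp add: dist_norm)
    then show "g \<in> {g. dist (g n) a < r}"
      using dist_triangle[of "g n" a "f n"] by simp
  qed
  then show "\<exists>K e. compact K \<and> e > 0 \<and> {g. \<forall>n\<in>K. norm (g n - f n) < e} \<subseteq> {g. dist (g n) a < r}"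
    using f by (intro exI[of _ "{n}"] exI[of _ "r - dist (f n) a"]) auto
qed

lemma Hausdorff_space_ucc_topology: "Hausdorff_space ucc_topology"
  unfolding Hausdorff_space_def
proof (intro allI impI)
  fix f g :: "nat \<Rightarrow> complex"
  assume "f \<in> topspace ucc_topology \<and> g \<in> topspace ucc_topology \<and> f \<noteq> g"
  then obtain n where n: "f n \<noteq> g n"
    by auto
  define r where "r = dist (f n) (g n) / 2"
  have "\<not> (dist (h n) (f n) < r \<and> dist (h n) (g n) < r)" for h
    using dist_triangle[of "f n" "g n" "h n"] dist_commute[of "f n" "h n"] unfolding r_def by linarith
  then have "disjnt {h. dist (h n) (f n) < r} {h. dist (h n) (g n) < r}"
    by (auto simp: disjnt_iff)
  moreover have "r > 0"
    using n by (simp add: r_def)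
  ultimately show "\<exists>U V. openin ucc_topology U \<and> openin ucc_topology V \<and> f \<in> U \<and> g \<in> V \<and> disjnt U V"
    by (intro exI[of _ "{h. dist (h n) (f n) < r}"] exI[of _ "{h. dist (h n) (g n) < r}"] conjI
        openin_ucc_topology_ball_at) simp_all
qed

lemma chi_eq_one_below: "enat n \<le> k \<Longrightarrow> chi q k n = 1"
  by (cases k) (auto simp: chi_def)

lemma continuous_map_chi: "continuous_map euclidean ucc_topology (chi q)"
  unfolding continuous_map_def topspace_ucc_topology
proof (intro conjI allI impI)
  fix U assume U: "openin ucc_topology U"
  have "\<exists>M. {enat M<..} \<subseteq> {x. chi q x \<in> U}" if "chi q \<infinity> \<in> U"
  proof -
    obtain K e where K: "compact K" and e: "e > 0"
      and nbhd: "{g. \<forall>n\<in>K. norm (g n - chi q \<infinity> n) < e} \<subseteq> U"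
      using U \<open>chi q \<infinity> \<in> U\<close> unfolding openin_ucc_topology by meson
    obtain M where M: "\<And>n. n \<in> K \<Longrightarrow> n \<le> M"
      using compact_attains_sup[OF K] by (metis empty_iff)
    have "chi q x \<in> U" if "enat M < x" for x
    proof -
      have "chi q x n = chi q \<infinity> n" if "n \<in> K" for n
      proof -
        have "enat n \<le> x"
          using M[OF that] \<open>enat M < x\<close> by (meson enat_ord_simps(1) order.trans less_imp_le)
        then show ?thesis
          by (simp add: chi_eq_one_below)
      qed
      then have "chi q x \<in> {g. \<forall>n\<in>K. norm (g n - chi q \<infinity> n) < e}"
        using e by simp
      with nbhd show ?thesis
        by (rule subsetD)
    qed
    then show ?thesis
      by (intro exI[of _ M]) auto
  qed
  then show "openin euclidean {x \<in> topspace euclidean. chi q x \<in> U}"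
    by (simp add: open_enat_iff)
qed simp

lemma at_conv_off_diagonal:
  "m \<noteq> n \<or> m = 0 \<and> n = 0 \<Longrightarrow> at_conv q c m n = c (max m n)"
proof -
  assume mn: "m \<noteq> n \<or> m = 0 \<and> n = 0"
  then have "{j. conv q m n j \<noteq> 0} = {max m n}"
    by (auto simp: conv_def)
  then show ?thesis
    using mn by (simp add: at_conv_def conv_def)
qed

lemma character_off_diagonal:
  assumes "\<And>m n. at_conv q c m n = c m * c n" and "m < n"
  shows "c m * c n = c n"
  using assms at_conv_off_diagonal[of m n q c] by (simp add: max_def)

lemma character_zero:
  assumes char: "\<And>m n. at_conv q c m n = c m * c n" and nz: "c \<noteq> (\<lambda>_. 0)"
  shows "c 0 = 1"
proof (rule ccontr)
  assume "c 0 \<noteq> 1"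
  then have "c 0 = 0"
    using char[of 0 0] at_conv_off_diagonal[of 0 0 q c] by auto
  then have "c n = 0" for n
    using character_off_diagonal[OF char, of 0 n] by (cases n) auto
  with nz show False
    by auto
qed

lemma character_eq_one_below:
  assumes "\<And>m n. at_conv q c m n = c m * c n" and "m < n" and "c n \<noteq> 0"
  shows "c m = 1"
  using character_off_diagonal[OF assms(1,2)] assms(3) by simp

text \<open>The assumptions of the theorem without those that only serve to make (S, *) a
  hypergroup (finiteness of the supports, L_n contained in Q_n, and the inequality);
  the first two of these also follow from the ones kept.\<close>

locale max_hypergroup =
  fixes q :: "nat \<Rightarrow> nat \<Rightarrow> real"
  assumes q_nonneg: "\<And>n j. n \<ge> 1 \<Longrightarrow> q n j \<ge> 0"
    and sum_support_q: "\<And>n. n \<ge> 1 \<Longrightarrow> (\<Sum>j\<in>{j. q n j \<noteq> 0}. q n j) = 1"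
    and q_zero_nonzero: "\<And>n. n \<ge> 1 \<Longrightarrow> q n 0 \<noteq> 0"
    and support_q: "\<And>n. n \<ge> 1 \<Longrightarrow> {j. q n j \<noteq> 0} \<subseteq> Lset n \<union> {n}"
    and q_zero_mult: "\<And>m n. 0 < m \<Longrightarrow> m < n \<Longrightarrow> q n 0 = q n m * q m 0"
begin

lemma sum_support_q_eq_sum_atMost:
  fixes f :: "nat \<Rightarrow> 'a::real_vector"
  assumes "n \<ge> 1"
  shows "(\<Sum>j\<in>{j. q n j \<noteq> 0}. q n j *\<^sub>R f j) = (\<Sum>j\<le>n. q n j *\<^sub>R f j)"
  using support_q[OF assms] by (intro sum.mono_neutral_left) (auto simp: Lset_def)

lemma sum_q_atMost: "n \<ge> 1 \<Longrightarrow> (\<Sum>j\<le>n. q n j) = 1"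
  using sum_support_q_eq_sum_atMost[of n "\<lambda>_. 1::real"] sum_support_q[of n] by simp

lemma sum_q_lessThan: "n \<ge> 1 \<Longrightarrow> (\<Sum>j<n. q n j) = 1 - q n n"
  using sum_q_atMost[of n] by (simp add: lessThan_Suc_atMost[symmetric])

lemma q_zero_pos: "n \<ge> 1 \<Longrightarrow> q n 0 > 0"
  using q_nonneg[of n 0] q_zero_nonzero[of n] by linarith

lemma haar_pos: "haar q n > 0"
  using q_zero_pos[of n] by (auto simp: haar_def conv_def)

lemma q_eq_haar: "j < n \<Longrightarrow> q n j = q n 0 * haar q j"
  using q_zero_mult[of j n] q_zero_nonzero[of j] by (auto simp: haar_def conv_def field_simps)

lemma q_diagonal_less_one: "n \<ge> 1 \<Longrightarrow> q n n < 1"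
  using sum_q_lessThan[of n] member_le_sum[of 0 "{..<n}" "q n"] q_nonneg[of n] q_zero_pos[of n]
  by force

lemma beta_eq_q_diagonal: "beta q k = q (k+1) (k+1) - 1"
proof -
  have "(\<Sum>j<k+1. q (k+1) j) = q (k+1) 0 * haar_set q (Lset (k+1))"
    unfolding haar_set_def Lset_def sum_distrib_left by (intro sum.cong) (auto intro!: q_eq_haar)
  then have "1 - q (k+1) (k+1) = haar_set q (Lset (k+1)) / haar q (k+1)"
    using sum_q_lessThan[of "k+1"] by (simp add: haar_def conv_def mult.commute)
  then show ?thesis
    by (simp add: beta_def)
qed

lemma beta_neg: "beta q k < 0"
  using beta_eq_q_diagonal q_diagonal_less_one[of "k+1"] by simp

lemma at_conv_diagonal:
  "n \<ge> 1 \<Longrightarrow> at_conv q c n n = (\<Sum>j\<le>n. complex_of_real (q n j) * c j)"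
  using sum_support_q_eq_sum_atMost[of n c] by (simp add: at_conv_def conv_def scaleR_conv_of_real)

definition chi_real :: "enat \<Rightarrow> nat \<Rightarrow> real" where
  "chi_real k n = (case k of \<infinity> \<Rightarrow> 1
     | enat k \<Rightarrow> (if n \<le> k then 1 else if n = k + 1 then beta q k else 0))"

lemma chi_eq_of_real_chi_real: "chi q k n = complex_of_real (chi_real k n)"
  by (cases k) (auto simp: chi_def chi_real_def)

lemma sum_q_chi_real:
  assumes n: "n \<ge> 1"
  shows "(\<Sum>j\<le>n. q n j * chi_real k j) = chi_real k n ^ 2"
proof (cases k)
  case infinity
  then show ?thesis
    using sum_q_atMost[OF n] by (simp add: chi_real_def)
next
  case (enat k)
  have below: "(\<Sum>j\<le>m. q n j * chi_real (enat k) j) = (\<Sum>j\<le>m. q n j)" if "m \<le> k" for m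
    using that by (intro sum.cong) (auto simp: chi_real_def)
  consider "n \<le> k" | "n = k + 1" | "n > k + 1"
    by linarith
  then show ?thesis
  proof cases
    case 1
    then show ?thesis
      using below[of n] sum_q_atMost[OF n] by (simp add: chi_real_def enat)
  next
    case 2
    then have "(\<Sum>j\<le>n. q n j * chi_real (enat k) j) = (1 - q n n) + q n n * beta q k"
      using below[of k] sum_q_lessThan[OF n] by (simp add: chi_real_def lessThan_Suc_atMost)
    also have "\<dots> = beta q k ^ 2"
      unfolding beta_eq_q_diagonal 2 by (simp add: power2_eq_square algebra_simps)
    finally show ?thesis
      using 2 by (simp add: chi_real_def enat)
  next
    case 3
    \<comment> \<open>The two nonzero terms cancel by the definition of beta.\<close>
    have "(\<Sum>j\<le>n. q n j * chi_real (enat k) j) = (\<Sum>j\<le>k+1. q n j * chi_real (enat k) j)"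
      using 3 by (intro sum.mono_neutral_right) (auto simp: chi_real_def)
    also have "\<dots> = (\<Sum>j\<le>k. q n j) + q n (k+1) * beta q k"
      using below[of k] by (simp add: chi_real_def)
    also have "(\<Sum>j\<le>k. q n j) = q n 0 * haar_set q (Lset (k+1))"
      unfolding haar_set_def Lset_def sum_distrib_left using 3
      by (intro sum.cong) (auto intro!: q_eq_haar)
    also have "q n (k+1) * beta q k = - q n 0 * haar_set q (Lset (k+1))"
      using q_eq_haar[of "k+1" n] 3 haar_pos[of "k+1"] by (simp add: beta_def)
    finally show ?thesis
      using 3 by (simp add: chi_real_def enat)
  qed
qed

lemma chi_multiplicative: "at_conv q (chi q k) m n = chi q k m * chi q k n"
proof (cases "m \<noteq> n \<or> m = 0 \<and> n = 0")
  case True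
  then show ?thesis
    by (cases k) (auto simp: at_conv_off_diagonal chi_def max_def)
next
  case False
  then show ?thesis
    using sum_q_chi_real[of n k]
    by (simp add: at_conv_diagonal chi_eq_of_real_chi_real power2_eq_square
        flip: of_real_mult of_real_sum)
qed

lemma chi_in_sym_chars: "chi q k \<in> sym_chars q"
proof -
  have "chi q k 0 = 1"
    by (cases k) (auto simp: chi_def)
  then have "chi q k \<noteq> (\<lambda>_. 0)"
    by (metis one_neq_zero)
  moreover have "range (chi q k) \<subseteq> {1, complex_of_real (beta q (the_enat k)), 0}"
    by (cases k) (auto simp: chi_def)
  then have "bounded (range (chi q k))"
    by (meson bounded_subset finite.emptyI finite.insertI finite_imp_bounded)
  ultimately show ?thesis
    using chi_multiplicative by (auto simp: sym_chars_def bchars_def chi_eq_of_real_chi_real)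
qed

lemma chi_Suc_eq_one_iff: "chi q x (Suc k) = 1 \<longleftrightarrow> enat k < x"
  using beta_neg[of k] by (cases x) (auto simp: chi_def)

lemma inj_chi: "inj (chi q)"
proof (rule injI)
  fix x y assume "chi q x = chi q y"
  then have below_iff: "enat k < x \<longleftrightarrow> enat k < y" for k
    using chi_Suc_eq_one_iff[of x k] chi_Suc_eq_one_iff[of y k] by simp
  show "x = y"
  proof (rule ccontr)
    assume "x \<noteq> y"
    then consider "x < y" | "y < x"
      by (rule linorder_neqE)
    then show False
    proof cases
      case 1
      then obtain k where "x = enat k"
        by (cases x) auto
      with below_iff[of k] 1 show False
        by simp
    next
      case 2
      then obtain k where "y = enat k"
        by (cases y) auto
      with below_iff[of k] 2 show False
        by simp
    qed
  qed
qed

lemma character_after_ones_cases: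
  assumes char: "\<And>m n. at_conv q c m n = c m * c n" and n: "n \<ge> 1"
    and ones: "\<And>j. j < n \<Longrightarrow> c j = 1"
  shows "c n = 1 \<or> c n = complex_of_real (q n n) - 1"
proof -
  have "c n * c n = (\<Sum>j<n. complex_of_real (q n j)) + complex_of_real (q n n) * c n"
    using char[of n n] at_conv_diagonal[OF n] ones by (simp add: lessThan_Suc_atMost[symmetric])
  also have "(\<Sum>j<n. complex_of_real (q n j)) = 1 - complex_of_real (q n n)"
    using sum_q_lessThan[OF n] by (simp flip: of_real_sum)
  finally have "(c n - 1) * (c n - (complex_of_real (q n n) - 1)) = 0"
    by (simp add: algebra_simps)
  then show ?thesis
    by simp
qed

lemma character_after_ones_nonzero:
  assumes "\<And>m n. at_conv q c m n = c m * c n" and "n \<ge> 1" and "\<And>j. j < n \<Longrightarrow> c j = 1"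
  shows "c n \<noteq> 0"
  using character_after_ones_cases[OF assms] q_diagonal_less_one[OF assms(2)] by auto

lemma character_eq_chi:
  assumes char: "\<And>m n. at_conv q c m n = c m * c n" and nz: "c \<noteq> (\<lambda>_. 0)"
  obtains k where "c = chi q k"
proof (cases "finite {n. c n \<noteq> 0}")
  case False
  have "c m = 1" for m
  proof -
    obtain n where "n > m" "c n \<noteq> 0"
      using False infinite_nat_iff_unbounded[of "{n. c n \<noteq> 0}"] by auto
    then show ?thesis
      using character_eq_one_below[OF char] by blast
  qed
  then have "c = chi q \<infinity>"
    by (auto simp: chi_def)
  then show ?thesis
    by (rule that)
next
  case True
  define N where "N = Max {n. c n \<noteq> 0}"
  have c0: "c 0 = 1"
    by (rule character_zero[OF char nz])
  have "N \<in> {n. c n \<noteq> 0}"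
    unfolding N_def using True c0 by (intro Max_in) (auto intro: exI[of _ 0])
  then have cN: "c N \<noteq> 0"
    by simp
  have "n \<le> N" if "c n \<noteq> 0" for n
    unfolding N_def using True that by (intro Max_ge) auto
  then have above: "c n = 0" if "n > N" for n
    using that by (meson not_le)
  have below: "c j = 1" if "j < N" for j
    using character_eq_one_below[OF char that cN] .
  have "N \<noteq> 0"
    using character_after_ones_nonzero[OF char, of 1] above[of 1] c0 by auto
  then obtain k where k: "N = Suc k"
    using not0_implies_Suc by blast
  have "c N \<noteq> 1"
  proof
    assume "c N = 1"
    then have "c (Suc N) \<noteq> 0"
      using character_after_ones_nonzero[OF char, of "Suc N"] below by (auto simp: less_Suc_eq)
    with above show False
      by simp
  qed
  then have "c N = complex_of_real (beta q k)"
    using character_after_ones_cases[OF char, of N] below k beta_eq_q_diagonal[of k] by simp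
  have "c n = chi q (enat k) n" for n
  proof (cases n N rule: linorder_cases)
    case less
    then show ?thesis
      using below k by (simp add: chi_def)
  next
    case equal
    then show ?thesis
      using \<open>c N = complex_of_real (beta q k)\<close> k by (simp add: chi_def)
  next
    case greater
    then show ?thesis
      using above k by (simp add: chi_def)
  qed
  then show ?thesis
    by (intro that ext)
qed

lemma sym_chars_eq_range_chi: "sym_chars q = range (chi q)"
  and bchars_eq_sym_chars: "bchars q = sym_chars q"
proof -
  have "bchars q \<subseteq> range (chi q)"
  proof
    fix c assume "c \<in> bchars q"
    then have "\<And>m n. at_conv q c m n = c m * c n" and "c \<noteq> (\<lambda>_. 0)"
      by (auto simp: bchars_def)
    then obtain k where "c = chi q k"
      by (rule character_eq_chi)
    then show "c \<in> range (chi q)"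
      by simp
  qed
  moreover have "range (chi q) \<subseteq> sym_chars q"
    using chi_in_sym_chars by auto
  moreover have "sym_chars q \<subseteq> bchars q"
    by (auto simp: sym_chars_def)
  ultimately show "sym_chars q = range (chi q)" "bchars q = sym_chars q"
    by auto
qed

lemma homeomorphic_map_chi:
  "homeomorphic_map (euclidean :: enat topology) (subtopology ucc_topology (sym_chars q)) (chi q)"
proof (rule continuous_imp_homeomorphic_map)
  show "continuous_map euclidean (subtopology ucc_topology (sym_chars q)) (chi q)"
    using continuous_map_chi chi_in_sym_chars by (auto simp: continuous_map_in_subtopology)
  show "compact_space (euclidean :: enat topology)"
    by (simp add: compact_space_def compact_UNIV)
  show "Hausdorff_space (subtopology ucc_topology (sym_chars q))"
    by (simp add: Hausdorff_space_subtopology Hausdorff_space_ucc_topology)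
  show "chi q ` topspace euclidean = topspace (subtopology ucc_topology (sym_chars q))"
    by (simp add: topspace_ucc_topology sym_chars_eq_range_chi)
  show "inj_on (chi q) (topspace euclidean)"
    using inj_chi by simp
qed

end

theorem theorem3p6:
  fixes q :: "nat \<Rightarrow> nat \<Rightarrow> real"
  assumes nonneg: "\<And>n j. n \<ge> 1 \<Longrightarrow> q n j \<ge> 0"
      and fin: "\<And>n. n \<ge> 1 \<Longrightarrow> finite {j. q n j \<noteq> 0}"
      and prob: "\<And>n. n \<ge> 1 \<Longrightarrow> (\<Sum>j\<in>{j. q n j \<noteq> 0}. q n j) = 1"
      and zero_in: "\<And>n. n \<ge> 1 \<Longrightarrow> q n 0 \<noteq> 0"
      and L_sub: "\<And>n. n \<ge> 1 \<Longrightarrow> Lset n \<subseteq> {j. q n j \<noteq> 0}"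
      and sub_L: "\<And>n. n \<ge> 1 \<Longrightarrow> {j. q n j \<noteq> 0} \<subseteq> Lset n \<union> {n}"
      and mult: "\<And>m n. 0 < m \<Longrightarrow> m < n \<Longrightarrow> q n 0 = q n m * q m 0"
      and ineq: "\<And>m n. 0 < m \<Longrightarrow> m < n \<Longrightarrow>
                   q n 0 * (1 + (\<Sum>k\<in>{k. 0 < k \<and> k < n}. 1 / q k 0)) \<le> 1"
  shows "bchars q = sym_chars q
    \<and> homeomorphic_map (euclidean :: enat topology) (subtopology ucc_topology (sym_chars q)) (chi q)
    \<and> (\<forall>k. beta q k = - (\<Sum>j\<in>Lset (k+1). haar q j) / haar q (k+1)
          \<and> beta q k = (haar q (k+1) - haar_set q (Lset (k+1))) / haar q (k+1) - 1
          \<and> beta q k = conv q (k+1) (k+1) (k+1) - 1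
          \<and> beta q k = q (k+1) (k+1) - 1)"
proof -
  interpret max_hypergroup q
    using nonneg prob zero_in sub_L mult by unfold_locales
  have "haar q (k+1) \<noteq> 0" for k
    using haar_pos[of "k+1"] by simp
  then show ?thesis
    using bchars_eq_sym_chars homeomorphic_map_chi beta_eq_q_diagonal
    by (auto simp: beta_def haar_set_def conv_def diff_divide_distrib simp del: Suc_eq_plus1)
qed

end
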